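(* For every integer $n\ge1$, $$B_n(t)=CB_n(t)+\frac{1}{n}(1-t)\,CB_n'(t),$$ where $CB_n'(t)$ denotes the derivative of the polynomial $CB_n(t)$ with respect to $t$.
   Context: For $\pi=[\pi_1,\ldots,\pi_n]\in S_n$ (one-line notation), a pair $(\pi_i,\pi_{i+1})$ with $1\le i\le n-1$ is a (regular) bond if $\pi_i-\pi_{i+1}=\pm1$. The pair $(\pi_n,\pi_1)$ is an edge bond if $\pi_n-\pi_1=\pm1$. A cyclic bond is a regular bond or an edge bond. Let $bnd(\pi)$ be the number of regular bonds and $cbnd(\pi)$ the number of cyclic bonds of $\pi$. For $n\ge1$ let $B_n(t)=\sum_{\pi\in S_n}t^{bnd(\pi)}$ and $CB_n(t)=\sum_{\pi\in S_n}t^{cbnd(\pi)}$. In particular each permutation of $S_2$ has $2$ cyclic bonds (so $CB_2(t)=2t^2$), and $B_1(t)=CB_1(t)=1$. *)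

theory Defs
  imports "HOL-Combinatorics.Multiset_Permutations" "HOL-Computational_Algebra.Polynomial"
begin

definition adj :: "nat \<Rightarrow> nat \<Rightarrow> bool" where
  "adj a b \<longleftrightarrow> a = b + 1 \<or> b = a + 1"

definition bnd :: "nat list \<Rightarrow> nat" where
  "bnd xs = card {i. i + 1 < length xs \<and> adj (xs ! i) (xs ! (i + 1))}"

definition cbnd :: "nat list \<Rightarrow> nat" where
  "cbnd xs = bnd xs + (if xs \<noteq> [] \<and> adj (last xs) (hd xs) then 1 else 0)"

definition B :: "nat \<Rightarrow> real poly" where
  "B n = (\<Sum>xs\<in>permutations_of_set {1..n}. monom 1 (bnd xs))"

definition CB :: "nat \<Rightarrow> real poly" where
  "CB n = (\<Sum>xs\<in>permutations_of_set {1..n}. monom 1 (cbnd xs))"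

end

theory Submission
  imports Defs
begin

text \<open>
  The n rotations of a permutation all have the same number c of cyclic bonds. Rotating so that
  a given cyclic bond becomes the edge pair turns it into a non-regular bond, so among the n
  rotations exactly c have c - 1 regular bonds and the others have c. A permutation with c cyclic
  bonds therefore contributes (n - c) t^c + c t^(c-1) = n t^c + (1 - t) (t^c)' to n B_n(t), and
  since rotation permutes S_n, n B_n = n CB_n + (1 - t) CB_n'.
\<close>

definition edge_bond :: "nat list \<Rightarrow> nat" where
  "edge_bond xs = of_bool (xs \<noteq> [] \<and> adj (last xs) (hd xs))"

lemma cbnd_eq_bnd_plus_edge_bond: "cbnd xs = bnd xs + edge_bond xs"
  by (simp add: cbnd_def edge_bond_def)

lemma bnd_conv_sum: "bnd xs = (\<Sum>i<length xs - 1. of_bool (adj (xs ! i) (xs ! (i + 1))))"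
proof -
  have "{i. i + 1 < length xs \<and> adj (xs ! i) (xs ! (i + 1))}
        = {..<length xs - 1} \<inter> {i. adj (xs ! i) (xs ! (i + 1))}"
    by auto
  then show ?thesis
    by (simp add: bnd_def)
qed

lemma bnd_Cons: "ys \<noteq> [] \<Longrightarrow> bnd (a # ys) = of_bool (adj a (hd ys)) + bnd ys"
  by (cases ys)
    (simp_all add: bnd_conv_sum sum.lessThan_Suc_shift del: sum.lessThan_Suc sum_of_bool_eq)

lemma bnd_snoc: "ys \<noteq> [] \<Longrightarrow> bnd (ys @ [a]) = bnd ys + of_bool (adj (last ys) a)"
  by (cases ys rule: rev_cases)
    (auto simp: bnd_conv_sum nth_append Suc_diff_Suc simp del: sum_of_bool_eq intro!: sum.cong)

lemma cbnd_rotate1: "cbnd (rotate1 xs) = cbnd xs"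
proof (cases xs)
  case (Cons a ys)
  then show ?thesis
    by (cases "ys = []")
      (simp_all add: cbnd_eq_bnd_plus_edge_bond edge_bond_def bnd_Cons bnd_snoc hd_append)
qed simp

lemma cbnd_rotate: "cbnd (rotate k xs) = cbnd xs"
  by (induction k) (simp_all add: cbnd_rotate1)

lemma bnd_rotate: "bnd (rotate k xs) = cbnd xs - edge_bond (rotate k xs)"
  by (metis cbnd_eq_bnd_plus_edge_bond cbnd_rotate diff_add_inverse2)

lemma edge_bond_rotate:
  assumes "0 < k" "k < length xs"
  shows "edge_bond (rotate k xs) = of_bool (adj (xs ! (k - 1)) (xs ! k))"
proof -
  have "xs \<noteq> []"
    using assms by auto
  moreover have "(k + (length xs - 1)) mod length xs = k - 1"
    using assms by (simp add: mod_if)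
  ultimately show ?thesis
    using assms by (simp add: edge_bond_def last_conv_nth nth_rotate hd_rotate_conv_nth)
qed

lemma sum_edge_bond_rotate: "(\<Sum>k<length xs. edge_bond (rotate k xs)) = cbnd xs"
proof (cases xs)
  case (Cons a ys)
  have "(\<Sum>k<length xs. edge_bond (rotate k xs))
      = edge_bond xs + (\<Sum>k<length ys. edge_bond (rotate (Suc k) xs))"
    using Cons by (simp add: sum.lessThan_Suc_shift del: sum.lessThan_Suc rotate_Suc)
  also have "(\<Sum>k<length ys. edge_bond (rotate (Suc k) xs))
      = (\<Sum>k<length ys. of_bool (adj (xs ! k) (xs ! (k + 1))))"
    using Cons by (intro sum.cong) (simp_all add: edge_bond_rotate del: rotate_Suc)
  also have "\<dots> = bnd xs"
    using Cons by (simp add: bnd_conv_sum del: sum_of_bool_eq)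
  finally show ?thesis
    by (simp add: cbnd_eq_bnd_plus_edge_bond)
qed (simp add: cbnd_def bnd_def)

lemma smult_sum_right: "smult a (sum f S) = (\<Sum>x\<in>S. smult a (f x))"
  using sum_distrib_left[of "[:a:]" f S] by simp

lemma pderiv_sum: "pderiv (sum f S) = (\<Sum>x\<in>S. pderiv (f x))"
  using higher_pderiv_sum[of 1 f S] by simp

lemma one_minus_X_mult_pderiv_monom:
  "[:1, -1:] * pderiv (monom (1::'a::idom) c) = smult (of_nat c) (monom 1 (c - 1) - monom 1 c)"
  by (cases c) (simp_all add: pderiv_monom poly_eq_iff coeff_monom coeff_pCons split: nat.split)

lemma sum_monom_minus_zero_one:
  fixes e :: "nat \<Rightarrow> nat"
  assumes zero_one: "\<And>k. k < m \<Longrightarrow> e k \<le> 1" and sum_e: "(\<Sum>k<m. e k) = c"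
  shows "(\<Sum>k<m. monom (1::'a::idom) (c - e k))
    = smult (of_nat m) (monom 1 c) + [:1, -1:] * pderiv (monom 1 c)"
proof -
  have "monom (1::'a) (c - e k) = monom 1 c + smult (of_nat (e k)) (monom 1 (c - 1) - monom 1 c)"
    if "k < m" for k
  proof -
    have "e k \<le> c"
      using that sum_e member_le_sum[of k "{..<m}" e] by simp
    then show ?thesis
      using zero_one[OF that] by (cases "e k") simp_all
  qed
  then have "(\<Sum>k<m. monom (1::'a) (c - e k))
      = (\<Sum>k<m. monom 1 c) + smult (\<Sum>k<m. of_nat (e k)) (monom 1 (c - 1) - monom 1 c)"
    by (simp add: sum.distrib smult_sum)
  also have "\<dots> = smult (of_nat m) (monom 1 c) + smult (of_nat c) (monom 1 (c - 1) - monom 1 c)"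
    by (simp flip: sum_e of_nat_sum add: smult_monom of_nat_poly)
  finally show ?thesis
    by (simp only: one_minus_X_mult_pderiv_monom)
qed

lemma sum_monom_bnd_rotate:
  "(\<Sum>k<length xs. monom (1::'a::idom) (bnd (rotate k xs)))
    = smult (of_nat (length xs)) (monom 1 (cbnd xs)) + [:1, -1:] * pderiv (monom 1 (cbnd xs))"
  unfolding bnd_rotate using sum_edge_bond_rotate[of xs]
  by (intro sum_monom_minus_zero_one) (simp_all add: edge_bond_def)

lemma bij_betw_rotate_permutations_of_set:
  "bij_betw (rotate k) (permutations_of_set A) (permutations_of_set A)"
proof -
  have "inj_on (rotate k) (permutations_of_set A)"
    using inj_fn[OF inj_rotate1, of k] unfolding rotate_def by (metis inj_on_subset subset_UNIV)
  moreover have "rotate k ` permutations_of_set A \<subseteq> permutations_of_set A"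
    by (auto simp: permutations_of_set_def)
  ultimately show ?thesis
    by (simp add: bij_betw_def endo_inj_surj)
qed

lemma smult_B_eq:
  "smult (real n) (B n) = smult (real n) (CB n) + [:1, -1:] * pderiv (CB n)"
proof -
  let ?P = "permutations_of_set {1..n}"
  have "(\<Sum>xs\<in>?P. monom 1 (bnd (rotate k xs))) = B n" for k
    unfolding B_def by (rule sum.reindex_bij_betw[OF bij_betw_rotate_permutations_of_set])
  then have "smult (real n) (B n) = (\<Sum>k<n. \<Sum>xs\<in>?P. monom 1 (bnd (rotate k xs)))"
    by (simp add: of_nat_poly)
  also have "\<dots> = (\<Sum>xs\<in>?P. \<Sum>k<n. monom 1 (bnd (rotate k xs)))"
    by (rule sum.swap)
  also have "\<dots> = (\<Sum>xs\<in>?P. smult (real n) (monom 1 (cbnd xs))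
      + [:1, -1:] * pderiv (monom 1 (cbnd xs)))"
    using sum_monom_bnd_rotate length_finite_permutations_of_set
    by (intro sum.cong refl) fastforce
  also have "\<dots> = smult (real n) (CB n) + [:1, -1:] * pderiv (CB n)"
    by (simp only: CB_def sum.distrib smult_sum_right pderiv_sum sum_distrib_left)
  finally show ?thesis .
qed

theorem theorem2p2:
  fixes n :: nat
  assumes "n \<ge> 1"
  shows "B n = CB n + smult (1 / real n) ([:1, -1:] * pderiv (CB n))"
proof -
  have "B n = smult (1 / real n) (smult (real n) (B n))"
    using assms by simp
  then show ?thesis
    using assms by (simp add: smult_B_eq smult_add_right)
qed

end
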